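(* Let $\gamma(n)>0$ and $a(n)\ge\frac12$ be sequences, $\rho_0=\sqrt{1+e^{W_0(2/e^2)+2}}$, and $$\sigma(n)\defeq\frac{a(n)+\gamma(n)}{W_0\!\left(\frac{1}{2\rho_0\gamma(n)}+\frac1{\rho_0}\right)}.$$ Then $\sigma(n)\in O\big(a(n)\log(1/\gamma(n))^{-1}\big)$ if $\gamma(n)\in o(1)$, and $\sigma(n)\in O(a(n)+\gamma(n))$ if $\gamma(n)\in\Omega(1)$.
   Context: $W_0$ is the principal branch of the Lambert W function. In the paper, $\sigma(n)=s(\varepsilon=n^{-a})/\log n$ is the normalised Taylor order, $\gamma(n)=\beta R_{\mathbf Q}R_{\mathbf K}/\log n$ the normalised entry size, and $a(n)$ the error exponent. Asymptotics are as $n\to\infty$. *)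

theory Defs
  imports Complex_Main "HOL-Library.Landau_Symbols"
begin

definition lambertW0 :: "real \<Rightarrow> real" where
  "lambertW0 x = (THE w. w \<ge> -1 \<and> w * exp w = x)"

definition rho0 :: real where
  "rho0 = sqrt (1 + exp (lambertW0 (2 / exp 1 ^ 2) + 2))"

end

theory Submission
  imports Defs
begin

text \<open>The function \<open>w \<mapsto> w e\<^sup>w\<close> is strictly increasing on \<open>[-1, \<infinity>)\<close>, so \<open>W\<^sub>0\<close> is its
  increasing inverse there; and \<open>W\<^sub>0 x \<ge> (ln x)/2\<close>, since otherwise both \<open>W\<^sub>0 x\<close> and
  \<open>exp (W\<^sub>0 x)\<close> would be below \<open>\<surd>x\<close>.
  With \<open>x = 1/(2\<rho>\<^sub>0\<gamma>) + 1/\<rho>\<^sub>0\<close> this gives two lower bounds for the denominator of \<open>\<sigma>\<close>: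
  the constant \<open>W\<^sub>0(1/\<rho>\<^sub>0) > 0\<close> always, and \<open>ln(1/\<gamma>)/4\<close> once \<open>\<gamma> \<le> 1/(4\<rho>\<^sub>0\<^sup>2)\<close>;
  meanwhile \<open>a + \<gamma> \<le> 2a\<close> for \<open>\<gamma> \<le> 1/2\<close>.\<close>

lemma mult_exp_strict_mono:
  fixes v w :: real
  assumes "-1 \<le> v" "v < w"
  shows "v * exp v < w * exp w"
proof (rule DERIV_pos_imp_increasing_open[OF \<open>v < w\<close>])
  fix t :: real assume "v < t"
  then have "(1 + t) * exp t > 0" using \<open>-1 \<le> v\<close> by simp
  moreover have "((\<lambda>t. t * exp t) has_real_derivative (1 + t) * exp t) (at t)"
    by (auto intro!: derivative_eq_intros simp: algebra_simps)
  ultimately show "\<exists>y. ((\<lambda>t. t * exp t) has_real_derivative y) (at t) \<and> y > 0"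
    by blast
qed (intro continuous_intros)

lemma lambertW0_mult_exp_cancel:
  fixes w :: real
  assumes "-1 \<le> w"
  shows "lambertW0 (w * exp w) = w"
  unfolding lambertW0_def
proof (rule the_equality)
  fix v assume v: "v \<ge> -1 \<and> v * exp v = w * exp w"
  show "v = w"
    using mult_exp_strict_mono[of v w] mult_exp_strict_mono[of w v] v assms
    by (cases v w rule: linorder_cases) auto
qed (use assms in auto)

lemma lambertW0_nonneg_mult_exp:
  fixes x :: real
  assumes "0 \<le> x"
  shows "0 \<le> lambertW0 x" and "lambertW0 x * exp (lambertW0 x) = x"
proof -
  have "x * 1 \<le> x * exp x" using assms by (intro mult_left_mono) auto
  moreover have "continuous_on {0..x} (\<lambda>w. w * exp w)" by (intro continuous_intros)
  ultimately obtain w where "0 \<le> w" "w * exp w = x"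
    using IVT'[of "\<lambda>w. w * exp w" 0 x x] assms by auto
  then show "0 \<le> lambertW0 x" "lambertW0 x * exp (lambertW0 x) = x"
    using lambertW0_mult_exp_cancel[of w] by auto
qed

lemma lambertW0_pos:
  fixes x :: real
  assumes "0 < x"
  shows "0 < lambertW0 x"
  using lambertW0_nonneg_mult_exp[of x] assms by (cases "lambertW0 x = 0") auto

lemma lambertW0_mono:
  fixes x y :: real
  assumes "0 \<le> x" "x \<le> y"
  shows "lambertW0 x \<le> lambertW0 y"
proof (rule ccontr)
  assume "\<not> lambertW0 x \<le> lambertW0 y"
  then have "lambertW0 y * exp (lambertW0 y) < lambertW0 x * exp (lambertW0 x)"
    using lambertW0_nonneg_mult_exp[of y] assms by (intro mult_exp_strict_mono) auto
  then show False
    using lambertW0_nonneg_mult_exp[of x] lambertW0_nonneg_mult_exp[of y] assms by simp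
qed

lemma lambertW0_ge_half_ln:
  fixes x :: real
  assumes "0 < x"
  shows "ln x / 2 \<le> lambertW0 x"
proof (rule ccontr)
  define w where "w = lambertW0 x"
  have w: "0 \<le> w" "w * exp w = x"
    using lambertW0_nonneg_mult_exp[of x] assms unfolding w_def by auto
  assume "\<not> ln x / 2 \<le> lambertW0 x"
  then have w_less: "w < ln (sqrt x)" using assms unfolding w_def by (simp add: ln_sqrt)
  have "ln (sqrt x) < sqrt x" using assms by (intro ln_less_self) simp
  with w_less have "w < sqrt x" by linarith
  moreover have "exp w < sqrt x"
    using w_less assms by (metis exp_less_cancel_iff exp_ln real_sqrt_gt_zero)
  ultimately have "w * exp w < sqrt x * sqrt x" using w(1) assms by (intro mult_strict_mono) auto
  then show False using w(2) assms by simp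
qed

lemma lambertW0_ge_quarter_ln_inverse:
  fixes \<rho> g :: real
  assumes "0 < \<rho>" "0 < g" "4 * \<rho>\<^sup>2 * g \<le> 1"
  shows "ln (1 / g) / 4 \<le> lambertW0 (1 / (2 * \<rho> * g) + 1 / \<rho>)"
proof -
  have "2 * ln (2 * \<rho>) = ln ((2 * \<rho>)\<^sup>2)"
    using assms ln_realpow[of "2 * \<rho>" 2] by simp
  also have "\<dots> \<le> ln (1 / g)"
    using assms by (subst ln_le_cancel_iff) (auto simp: field_simps power_mult_distrib)
  finally have ln_2\<rho>: "2 * ln (2 * \<rho>) \<le> ln (1 / g)" .
  have "ln (1 / g) - ln (2 * \<rho>) = ln (1 / (2 * \<rho> * g))"
    using assms by (simp add: ln_div ln_mult)
  also have "\<dots> \<le> ln (1 / (2 * \<rho> * g) + 1 / \<rho>)"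
    using assms by (subst ln_le_cancel_iff) (auto intro: add_pos_pos)
  finally show ?thesis
    using lambertW0_ge_half_ln[of "1 / (2 * \<rho> * g) + 1 / \<rho>"] ln_2\<rho> assms
    by (simp add: add_pos_pos)
qed

lemma lambertW0_shifted_inverse_pos:
  fixes \<rho> g :: real
  assumes "0 < \<rho>" "0 < g"
  shows "0 < lambertW0 (1 / (2 * \<rho> * g) + 1 / \<rho>)"
  using assms by (intro lambertW0_pos add_pos_pos) auto

lemma divide_lambertW0_shifted_inverse_le_const:
  fixes \<rho> g s :: real
  assumes "0 < \<rho>" "0 < g" "0 \<le> s"
  shows "s / lambertW0 (1 / (2 * \<rho> * g) + 1 / \<rho>) \<le> s / lambertW0 (1 / \<rho>)"
proof (rule divide_left_mono)
  show "lambertW0 (1 / \<rho>) \<le> lambertW0 (1 / (2 * \<rho> * g) + 1 / \<rho>)"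
    using assms by (intro lambertW0_mono) auto
  show "0 < lambertW0 (1 / (2 * \<rho> * g) + 1 / \<rho>) * lambertW0 (1 / \<rho>)"
    using assms by (intro mult_pos_pos lambertW0_shifted_inverse_pos lambertW0_pos) simp_all
qed (use assms in simp)

lemma divide_lambertW0_shifted_inverse_le_ln:
  fixes \<rho> g a :: real
  assumes "1 \<le> \<rho>" "0 < g" "4 * \<rho>\<^sup>2 * g \<le> 1" "1/2 \<le> a"
  shows "(a + g) / lambertW0 (1 / (2 * \<rho> * g) + 1 / \<rho>) \<le> 8 * (a / ln (1 / g))"
proof -
  have "4 * g \<le> 4 * \<rho>\<^sup>2 * g" using assms by simp
  then have "g \<le> 1/4" using assms by linarith
  then have "0 < ln (1 / g)" and "a + g \<le> 2 * a" using assms by auto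
  then have "(a + g) / lambertW0 (1 / (2 * \<rho> * g) + 1 / \<rho>) \<le> (2 * a) / (ln (1 / g) / 4)"
    using lambertW0_ge_quarter_ln_inverse[of \<rho> g] assms by (intro frac_le) auto
  then show ?thesis by simp
qed

lemma rho0_ge_1: "1 \<le> rho0"
  unfolding rho0_def by simp

theorem lemmaI2:
  fixes \<gamma> a \<sigma> :: "nat \<Rightarrow> real"
  assumes gpos: "\<And>n. \<gamma> n > 0"
    and ahalf: "\<And>n. a n \<ge> 1/2"
    and sigma_def: "\<And>n. \<sigma> n = (a n + \<gamma> n) /
                 lambertW0 (1 / (2 * rho0 * \<gamma> n) + 1 / rho0)"
  shows "(\<gamma> \<in> o(\<lambda>_. 1) \<longrightarrow> \<sigma> \<in> O(\<lambda>n. a n / ln (1 / \<gamma> n)))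
       \<and> (\<gamma> \<in> \<Omega>(\<lambda>_. 1) \<longrightarrow> \<sigma> \<in> O(\<lambda>n. a n + \<gamma> n))"
proof (intro conjI impI)
  have \<rho>: "1 \<le> rho0" by (rule rho0_ge_1)
  have \<sigma>_pos: "0 < \<sigma> n" for n
    using lambertW0_shifted_inverse_pos[of rho0 "\<gamma> n"] \<rho> gpos[of n] ahalf[of n]
    by (simp add: sigma_def)
  have "norm (\<sigma> n) \<le> 1 / lambertW0 (1 / rho0) * norm (a n + \<gamma> n)" for n
    using divide_lambertW0_shifted_inverse_le_const[of rho0 "\<gamma> n" "a n + \<gamma> n"]
      \<sigma>_pos[of n] \<rho> gpos[of n] ahalf[of n] by (simp add: sigma_def)
  then show "\<sigma> \<in> O(\<lambda>n. a n + \<gamma> n)" by (intro bigoI always_eventually) blast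
  assume "\<gamma> \<in> o(\<lambda>_. 1)"
  from landau_o.smallD[OF this, of "1 / (4 * rho0\<^sup>2)"] \<rho>
  have "eventually (\<lambda>n. 4 * rho0\<^sup>2 * \<gamma> n \<le> 1) sequentially"
    using gpos by (simp add: field_simps abs_of_pos)
  then have "eventually (\<lambda>n. norm (\<sigma> n) \<le> 8 * norm (a n / ln (1 / \<gamma> n))) sequentially"
  proof eventually_elim
    case (elim n)
    have "\<sigma> n \<le> 8 * (a n / ln (1 / \<gamma> n))"
      unfolding sigma_def using \<rho> gpos elim ahalf by (rule divide_lambertW0_shifted_inverse_le_ln)
    then show ?case using \<sigma>_pos[of n] abs_ge_self[of "a n / ln (1 / \<gamma> n)"] by simp
  qed
  then show "\<sigma> \<in> O(\<lambda>n. a n / ln (1 / \<gamma> n))" by (rule bigoI)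
qed

end
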